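(* Let $n\in\mathbb{Z}^+$, $n\geq 2$, $\beta=\frac{n-3}{n-1}$, let $\alpha:[0,\infty)\to\mathbb{R}$ be continuous, and let $u$ be a $C^3$ solution on $[0,1]\times[0,T)$ of $$u_{xxt}+uu_{xxx}+\beta u_xu_{xx}+\alpha(t)u_{xx}=0$$ with $u(1,t)=u_x(0,t)=u_x(1,t)=0$. Let $H(t)=-\int_0^1u_x(x,t)\,dx=u(0,t)$. Then for $t\in[0,T)$, $$H'(t)+\alpha(t)H(t)+\frac{n}{n-1}\int_0^1 u_x(x,t)^2\,dx=0,$$ and consequently $H'(t)+\alpha(t)H(t)+\frac{n}{n-1}H(t)^2\leq 0$. *)

theory Defs
  imports "HOL-Analysis.Analysis"
begin

text \<open>Functions of (x,t) on a set S of the plane. Partial derivatives are taken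
  relative to S (one-sided at boundary points), via the Frechet derivative within S.\<close>

definition pdx :: "(real \<times> real) set \<Rightarrow> (real \<times> real \<Rightarrow> real) \<Rightarrow> real \<times> real \<Rightarrow> real" where
  "pdx S f p = frechet_derivative f (at p within S) (1, 0)"

definition pdt :: "(real \<times> real) set \<Rightarrow> (real \<times> real \<Rightarrow> real) \<Rightarrow> real \<times> real \<Rightarrow> real" where
  "pdt S f p = frechet_derivative f (at p within S) (0, 1)"

fun Ck_on :: "nat \<Rightarrow> (real \<times> real) set \<Rightarrow> (real \<times> real \<Rightarrow> real) \<Rightarrow> bool" where
  "Ck_on 0 S f = continuous_on S f"
| "Ck_on (Suc k) S f =
     ((\<forall>p\<in>S. f differentiable (at p within S)) \<and> continuous_on S f \<and>
      Ck_on k S (pdx S f) \<and> Ck_on k S (pdt S f))"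

end

theory Submission
  imports Defs
begin

text \<open>Integrating by parts twice with the boundary conditions gives \<open>H(t) = \<integral>\<^sub>0\<^sup>1 x u\<^sub>x\<^sub>x dx\<close>.
  Differentiating under the integral and substituting the equation, the transport terms
  \<open>x (u u\<^sub>x\<^sub>x\<^sub>x + \<beta> u\<^sub>x u\<^sub>x\<^sub>x)\<close> are the derivative of
  \<open>x u u\<^sub>x\<^sub>x + (\<beta> - 1)/2 x u\<^sub>x\<^sup>2 - u u\<^sub>x\<close> up to \<open>(3 - \<beta>)/2 u\<^sub>x\<^sup>2\<close>, whose boundary
  values vanish, and \<open>(3 - \<beta>)/2 = n/(n - 1)\<close>. The inequality then follows from
  \<open>H\<^sup>2 = (\<integral> u\<^sub>x)\<^sup>2 \<le> \<integral> u\<^sub>x\<^sup>2\<close> (Cauchy-Schwarz).\<close>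

lemma has_real_derivative_frechet_derivative_along:
  fixes f :: "'a::real_normed_vector \<Rightarrow> real"
  assumes f: "f differentiable (at (g x) within S)"
    and g: "(g has_derivative (\<lambda>h. h *\<^sub>R v)) (at x within A)"
    and "g ` A \<subseteq> S"
  shows "((\<lambda>y. f (g y)) has_real_derivative frechet_derivative f (at (g x) within S) v) (at x within A)"
proof -
  let ?D = "frechet_derivative f (at (g x) within S)"
  have "(f has_derivative ?D) (at (g x) within g ` A)"
    using f frechet_derivative_works has_derivative_subset assms(3) by blast
  then have "((\<lambda>y. f (g y)) has_derivative (\<lambda>h. ?D (h *\<^sub>R v))) (at x within A)"
    using diff_chain_within[OF g] by (simp add: o_def)
  moreover have "linear ?D"
    using f frechet_derivative_works has_derivative_linear by blast
  then have "(\<lambda>h. ?D (h *\<^sub>R v)) = (\<lambda>h. ?D v * h)"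
    by (simp add: fun_eq_iff linear_scale)
  ultimately show ?thesis
    by (simp add: has_field_derivative_def)
qed

lemma pdx_has_real_derivative:
  assumes "f differentiable (at (x, t) within S)" and "\<And>y. y \<in> A \<Longrightarrow> (y, t) \<in> S"
  shows "((\<lambda>y. f (y, t)) has_real_derivative pdx S f (x, t)) (at x within A)"
proof -
  have "((\<lambda>y. (y, t)) has_derivative (\<lambda>h. h *\<^sub>R (1, 0))) (at x within A)"
    by (rule has_derivative_eq_rhs, (rule derivative_intros)+) auto
  then show ?thesis
    unfolding pdx_def using assms by (intro has_real_derivative_frechet_derivative_along) auto
qed

lemma pdt_has_real_derivative:
  assumes "f differentiable (at (x, t) within S)" and "\<And>s. s \<in> A \<Longrightarrow> (x, s) \<in> S"
  shows "((\<lambda>s. f (x, s)) has_real_derivative pdt S f (x, t)) (at t within A)"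
proof -
  have "((\<lambda>s. (x, s)) has_derivative (\<lambda>h. h *\<^sub>R (0, 1))) (at t within A)"
    by (rule has_derivative_eq_rhs, (rule derivative_intros)+) auto
  then show ?thesis
    unfolding pdt_def using assms by (intro has_real_derivative_frechet_derivative_along) auto
qed

lemma square_integral_le_length_times_integral_square:
  fixes g :: "real \<Rightarrow> real"
  assumes g: "continuous_on {a..b} g" and "a \<le> b"
  shows "(integral {a..b} g)^2 \<le> (b - a) * integral {a..b} (\<lambda>x. (g x)^2)"
proof -
  define m where "m = integral {a..b} g"
  define q where "q = integral {a..b} (\<lambda>x. (g x)^2)"
  define L where "L = b - a"
  have "((\<lambda>x. L^2 * (g x)^2 - 2 * L * m * g x + m^2) has_integral L^2 * q - 2 * L * m * m + L * m^2) {a..b}"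
    using \<open>a \<le> b\<close> unfolding m_def q_def L_def
    by (intro has_integral_add has_integral_diff has_integral_mult_right has_integral_const_real[THEN has_integral_eq_rhs]
        integrable_integral integrable_continuous_interval continuous_intros g) auto
  moreover have "(\<lambda>x. L^2 * (g x)^2 - 2 * L * m * g x + m^2) = (\<lambda>x. (L * g x - m)^2)"
    by (simp add: fun_eq_iff power2_eq_square algebra_simps)
  ultimately have "0 \<le> L^2 * q - 2 * L * m * m + L * m^2"
    by (metis (no_types, lifting) has_integral_nonneg zero_le_power2)
  then have "0 \<le> L * (L * q - m^2)"
    by (simp add: power2_eq_square algebra_simps)
  moreover have "L = 0 \<Longrightarrow> m = 0"
    unfolding L_def m_def by simp
  ultimately show ?thesis
    using \<open>a \<le> b\<close> unfolding m_def[symmetric] q_def[symmetric] L_def[symmetric]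
    by (cases "L = 0") (auto simp: L_def zero_le_mult_iff)
qed

lemma has_integral_first_moment_second_derivative:
  fixes f f' f'' :: "real \<Rightarrow> real"
  assumes "a \<le> b"
    and f: "\<And>x. x \<in> {a..b} \<Longrightarrow> (f has_real_derivative f' x) (at x within {a..b})"
    and f': "\<And>x. x \<in> {a..b} \<Longrightarrow> (f' has_real_derivative f'' x) (at x within {a..b})"
  shows "((\<lambda>x. x * f'' x) has_integral (b * f' b - f b) - (a * f' a - f a)) {a..b}"
proof (rule fundamental_theorem_of_calculus[OF \<open>a \<le> b\<close>])
  fix x assume "x \<in> {a..b}"
  then have "((\<lambda>x. x * f' x - f x) has_real_derivative x * f'' x) (at x within {a..b})"
    by (auto intro!: derivative_eq_intros f f')
  then show "((\<lambda>x. x * f' x - f x) has_vector_derivative x * f'' x) (at x within {a..b})"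
    by (simp add: has_real_derivative_iff_has_vector_derivative)
qed

lemma has_integral_first_moment_nonlinear_terms:
  fixes f f' f'' f''' :: "real \<Rightarrow> real" and \<beta> :: real
  defines "P \<equiv> \<lambda>x. x * f x * f'' x + (\<beta> - 1) / 2 * x * (f' x)^2 - f x * f' x"
  assumes "a \<le> b"
    and f: "\<And>x. x \<in> {a..b} \<Longrightarrow> (f has_real_derivative f' x) (at x within {a..b})"
    and f': "\<And>x. x \<in> {a..b} \<Longrightarrow> (f' has_real_derivative f'' x) (at x within {a..b})"
    and f'': "\<And>x. x \<in> {a..b} \<Longrightarrow> (f'' has_real_derivative f''' x) (at x within {a..b})"
  shows "((\<lambda>x. x * f x * f''' x + \<beta> * x * f' x * f'' x - (3 - \<beta>) / 2 * (f' x)^2)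
           has_integral P b - P a) {a..b}"
proof (rule fundamental_theorem_of_calculus[OF \<open>a \<le> b\<close>])
  fix x assume "x \<in> {a..b}"
  then have "(P has_real_derivative x * f x * f''' x + \<beta> * x * f' x * f'' x - (3 - \<beta>) / 2 * (f' x)^2)
      (at x within {a..b})"
    unfolding P_def
    by (auto intro!: derivative_eq_intros f f' f'' simp: field_simps power2_eq_square)
  then show "(P has_vector_derivative x * f x * f''' x + \<beta> * x * f' x * f'' x - (3 - \<beta>) / 2 * (f' x)^2)
      (at x within {a..b})"
    by (simp add: has_real_derivative_iff_has_vector_derivative)
qed

lemma has_integral_first_moment_equation_rhs:
  fixes f f' f'' f''' :: "real \<Rightarrow> real" and \<beta> \<gamma> l :: real
  assumes "0 \<le> l"
    and f: "\<And>x. x \<in> {0..l} \<Longrightarrow> (f has_real_derivative f' x) (at x within {0..l})"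
    and f': "\<And>x. x \<in> {0..l} \<Longrightarrow> (f' has_real_derivative f'' x) (at x within {0..l})"
    and f'': "\<And>x. x \<in> {0..l} \<Longrightarrow> (f'' has_real_derivative f''' x) (at x within {0..l})"
    and bc: "f l = 0" "f' 0 = 0" "f' l = 0"
  shows "((\<lambda>x. - (x * (f x * f''' x + \<beta> * f' x * f'' x + \<gamma> * f'' x)))
           has_integral - (\<gamma> * f 0 + (3 - \<beta>) / 2 * integral {0..l} (\<lambda>x. (f' x)^2))) {0..l}"
proof -
  have nonlinear: "((\<lambda>x. x * f x * f''' x + \<beta> * x * f' x * f'' x - (3 - \<beta>) / 2 * (f' x)^2)
      has_integral 0) {0..l}"
    using has_integral_first_moment_nonlinear_terms[OF \<open>0 \<le> l\<close> f f' f'', of \<beta>] bc by simp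
  have linear: "((\<lambda>x. x * f'' x) has_integral f 0) {0..l}"
    using has_integral_first_moment_second_derivative[OF \<open>0 \<le> l\<close> f f'] bc by simp
  have "continuous_on {0..l} f'"
    using f' by (rule DERIV_continuous_on)
  then have square: "((\<lambda>x. (f' x)^2) has_integral integral {0..l} (\<lambda>x. (f' x)^2)) {0..l}"
    by (intro integrable_integral integrable_continuous_interval continuous_intros)
  show ?thesis
    using has_integral_neg[OF has_integral_add[OF nonlinear has_integral_add[OF
          has_integral_mult_right[OF linear, of \<gamma>] has_integral_mult_right[OF square, of "(3 - \<beta>) / 2"]]]]
    by (simp add: algebra_simps)
qed

lemma has_real_derivative_integral_weighted_pdt:
  fixes g :: "real \<times> real \<Rightarrow> real" and w :: "real \<Rightarrow> real" and a b :: real and I :: "real set"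
  defines "S \<equiv> {a..b} \<times> I"
  assumes "convex I" and "t \<in> I"
    and diff: "\<And>p. p \<in> S \<Longrightarrow> g differentiable (at p within S)"
    and g: "continuous_on S g" and g_t: "continuous_on S (pdt S g)" and w: "continuous_on {a..b} w"
  shows "((\<lambda>s. integral {a..b} (\<lambda>x. w x * g (x, s))) has_real_derivative
           integral {a..b} (\<lambda>x. w x * pdt S g (x, t))) (at t within I)"
proof -
  have "((\<lambda>s. integral (cbox a b) (\<lambda>x. w x * g (x, s))) has_field_derivative
          integral (cbox a b) (\<lambda>x. w x * pdt S g (x, t))) (at t within I)"
  proof (rule leibniz_rule_field_derivative[where fx = "\<lambda>s x. w x * pdt S g (x, s)"])
    fix s x assume "s \<in> I" and "x \<in> cbox a b"
    then show "((\<lambda>s. w x * g (x, s)) has_real_derivative w x * pdt S g (x, s)) (at s within I)"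
      by (intro DERIV_cmult pdt_has_real_derivative diff) (auto simp: S_def)
  next
    fix s assume "s \<in> I"
    then have "continuous_on {a..b} (\<lambda>x. g (x, s))"
      by (intro continuous_on_compose2[OF g] continuous_intros) (auto simp: S_def)
    then show "(\<lambda>x. w x * g (x, s)) integrable_on cbox a b"
      unfolding cbox_interval by (intro integrable_continuous_interval continuous_intros w)
  next
    have "continuous_on (I \<times> {a..b}) (\<lambda>p. pdt S g (snd p, fst p))"
      by (intro continuous_on_compose2[OF g_t] continuous_intros) (auto simp: S_def)
    then show "continuous_on (I \<times> cbox a b) (\<lambda>(s, x). w x * pdt S g (x, s))"
      unfolding cbox_interval split_beta
      by (intro continuous_intros continuous_on_compose2[OF w]) auto
  qed (use assms in auto)
  then show ?thesis
    by simp
qed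

locale damped_proudman_johnson_solution =
  fixes T \<beta> :: real and \<alpha> :: "real \<Rightarrow> real" and u :: "real \<times> real \<Rightarrow> real"
    and S :: "(real \<times> real) set"
  assumes S_eq: "S = {0..1} \<times> {0..<T}"
    and C3: "Ck_on 3 S u"
    and pde: "\<And>x t. (x, t) \<in> S \<Longrightarrow>
      pdt S (pdx S (pdx S u)) (x, t) + u (x, t) * pdx S (pdx S (pdx S u)) (x, t)
      + \<beta> * pdx S u (x, t) * pdx S (pdx S u) (x, t) + \<alpha> t * pdx S (pdx S u) (x, t) = 0"
    and bc: "\<And>t. t \<in> {0..<T} \<Longrightarrow> u (1, t) = 0 \<and> pdx S u (0, t) = 0 \<and> pdx S u (1, t) = 0"
begin

lemma mem_S: "x \<in> {0..1} \<Longrightarrow> t \<in> {0..<T} \<Longrightarrow> (x, t) \<in> S"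
  by (simp add: S_eq)

lemma x_slice_derivatives:
  assumes "t \<in> {0..<T}" and "x \<in> {0..1}"
  shows "((\<lambda>y. u (y, t)) has_real_derivative pdx S u (x, t)) (at x within {0..1})"
    and "((\<lambda>y. pdx S u (y, t)) has_real_derivative pdx S (pdx S u) (x, t)) (at x within {0..1})"
    and "((\<lambda>y. pdx S (pdx S u) (y, t)) has_real_derivative pdx S (pdx S (pdx S u)) (x, t))
           (at x within {0..1})"
  using C3 assms by (auto simp: numeral_3_eq_3 mem_S intro!: pdx_has_real_derivative)

lemma first_moment_uxx:
  assumes "t \<in> {0..<T}"
  shows "((\<lambda>x. x * pdx S (pdx S u) (x, t)) has_integral u (0, t)) {0..1}"
  using has_integral_first_moment_second_derivative[of 0 1, OF _ x_slice_derivatives(1,2)[OF assms]]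
    bc[OF assms] by simp

lemma u_left_eq_neg_integral_ux:
  assumes "t \<in> {0..<T}"
  shows "u (0, t) = - integral {0..1} (\<lambda>x. pdx S u (x, t))"
proof -
  have "((\<lambda>x. pdx S u (x, t)) has_integral u (1, t) - u (0, t)) {0..1}"
    using x_slice_derivatives(1)[OF assms] by (intro fundamental_theorem_of_calculus)
      (auto simp: has_real_derivative_iff_has_vector_derivative[symmetric])
  then show ?thesis
    using bc[OF assms] by (simp add: integral_unique)
qed

lemma uxxt_eq:
  assumes "(x, t) \<in> S"
  shows "pdt S (pdx S (pdx S u)) (x, t) = - (u (x, t) * pdx S (pdx S (pdx S u)) (x, t)
    + \<beta> * pdx S u (x, t) * pdx S (pdx S u) (x, t) + \<alpha> t * pdx S (pdx S u) (x, t))"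
  using pde[OF assms] by linarith

lemma first_moment_uxxt:
  assumes "t \<in> {0..<T}"
  shows "((\<lambda>x. x * pdt S (pdx S (pdx S u)) (x, t)) has_integral
           - (\<alpha> t * u (0, t) + (3 - \<beta>) / 2 * integral {0..1} (\<lambda>x. (pdx S u (x, t))^2))) {0..1}"
proof -
  have "((\<lambda>x. - (x * (u (x, t) * pdx S (pdx S (pdx S u)) (x, t)
      + \<beta> * pdx S u (x, t) * pdx S (pdx S u) (x, t) + \<alpha> t * pdx S (pdx S u) (x, t))))
      has_integral - (\<alpha> t * u (0, t) + (3 - \<beta>) / 2 * integral {0..1} (\<lambda>x. (pdx S u (x, t))^2))) {0..1}"
    using has_integral_first_moment_equation_rhs[of 1, OF _ x_slice_derivatives[OF assms], of \<beta> "\<alpha> t"]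
      bc[OF assms] by simp
  then show ?thesis
    by (rule has_integral_eq[rotated]) (simp only: uxxt_eq[OF mem_S[OF _ assms]] mult_minus_right)
qed

lemma u_left_has_real_derivative:
  assumes "t \<in> {0..<T}"
  shows "((\<lambda>s. u (0, s)) has_real_derivative
           - (\<alpha> t * u (0, t) + (3 - \<beta>) / 2 * integral {0..1} (\<lambda>x. (pdx S u (x, t))^2)))
           (at t within {0..<T})"
proof -
  have "((\<lambda>s. integral {0..1} (\<lambda>x. x * pdx S (pdx S u) (x, s))) has_real_derivative
      integral {0..1} (\<lambda>x. x * pdt S (pdx S (pdx S u)) (x, t))) (at t within {0..<T})"
    using C3 assms unfolding S_eq
    by (intro has_real_derivative_integral_weighted_pdt) (auto simp: numeral_3_eq_3 intro: continuous_on_id)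
  then have "((\<lambda>s. u (0, s)) has_real_derivative
      integral {0..1} (\<lambda>x. x * pdt S (pdx S (pdx S u)) (x, t))) (at t within {0..<T})"
    by (rule has_field_derivative_transform_within[OF _ zero_less_one assms])
      (use first_moment_uxx in \<open>auto simp: integral_unique\<close>)
  then show ?thesis
    using integral_unique[OF first_moment_uxxt[OF assms]] by simp
qed

end

theorem mainTheorem3:
  fixes n :: nat and \<alpha> :: "real \<Rightarrow> real" and u :: "real \<times> real \<Rightarrow> real"
    and T \<beta> :: real
  defines "S \<equiv> {0..1} \<times> {0..<T}"
  assumes n: "n \<ge> 2"
    and beta: "\<beta> = (real n - 3) / (real n - 1)"
    and alpha_cont: "continuous_on {0..} \<alpha>"
    and C3: "Ck_on 3 S u"
    and pde: "\<forall>x t. (x, t) \<in> S \<longrightarrow>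
        pdt S (pdx S (pdx S u)) (x, t) + u (x, t) * pdx S (pdx S (pdx S u)) (x, t)
        + \<beta> * pdx S u (x, t) * pdx S (pdx S u) (x, t) + \<alpha> t * pdx S (pdx S u) (x, t) = 0"
    and bc: "\<forall>t\<in>{0..<T}. u (1, t) = 0 \<and> pdx S u (0, t) = 0 \<and> pdx S u (1, t) = 0"
    and H_def: "\<forall>t. H t = u (0, t)"
  shows "\<forall>t\<in>{0..<T}. H t = - integral {0..1} (\<lambda>x. pdx S u (x, t)) \<and>
     (\<exists>H'. (H has_real_derivative H') (at t within {0..<T}) \<and>
        H' + \<alpha> t * H t + real n / (real n - 1) * integral {0..1} (\<lambda>x. (pdx S u (x, t))^2) = 0 \<and>
        H' + \<alpha> t * H t + real n / (real n - 1) * (H t)^2 \<le> 0)"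
proof
  fix t assume t: "t \<in> {0..<T}"
  interpret damped_proudman_johnson_solution T \<beta> \<alpha> u S
    using C3 pde bc by unfold_locales (auto simp: S_def)
  have H_eq: "H = (\<lambda>s. u (0, s))"
    using H_def by auto
  have c: "real n / (real n - 1) = (3 - \<beta>) / 2" and c_nonneg: "(3 - \<beta>) / 2 \<ge> 0"
    using n unfolding beta by (simp_all add: field_simps)
  have "(u (0, t))^2 \<le> integral {0..1} (\<lambda>x. (pdx S u (x, t))^2)"
    using square_integral_le_length_times_integral_square[of 0 1 "\<lambda>x. pdx S u (x, t)"]
      DERIV_continuous_on[OF x_slice_derivatives(2)[OF t]] u_left_eq_neg_integral_ux[OF t]
    by simp
  then have "(3 - \<beta>) / 2 * (u (0, t))^2 \<le> (3 - \<beta>) / 2 * integral {0..1} (\<lambda>x. (pdx S u (x, t))^2)"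
    using c_nonneg by (rule mult_left_mono)
  then show "H t = - integral {0..1} (\<lambda>x. pdx S u (x, t)) \<and>
     (\<exists>H'. (H has_real_derivative H') (at t within {0..<T}) \<and>
        H' + \<alpha> t * H t + real n / (real n - 1) * integral {0..1} (\<lambda>x. (pdx S u (x, t))^2) = 0 \<and>
        H' + \<alpha> t * H t + real n / (real n - 1) * (H t)^2 \<le> 0)"
    unfolding H_eq c using u_left_eq_neg_integral_ux[OF t] u_left_has_real_derivative[OF t] by auto
qed

end
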